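(* For every prime power $q$ and every integer $k\ge 2$, there exists an $[n,k]_q$ maximum weight spectrum (MWS) code with $n=2^{\theta_q(k-1)}-1$, where $\theta_q(k-1)=\frac{q^k-1}{q-1}$.
   Context: An $[n,k]_q$ code is a $k$-dimensional $\mathbb{F}_q$-linear subspace $\mathcal{C}$ of $\mathbb{F}_q^n$ with the Hamming weight $w(c)=|\{i: c_i\neq 0\}|$. Standing convention: codes of dimension $k\ge 2$ are non-degenerate, i.e. no coordinate position is identically zero on $\mathcal{C}$. The weight set is $w(\mathcal{C})=\{w(c): c\in\mathcal{C}\setminus\{0\}\}$. For integers $m\ge 0$, $\theta_q(m)=\frac{q^{m+1}-1}{q-1}$. One always has $|w(\mathcal{C})|\le\theta_q(k-1)$, and $\mathcal{C}$ is called a maximum weight spectrum (MWS) code if $|w(\mathcal{C})|=\theta_q(k-1)$. *)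

theory Defs
  imports Complex_Main "HOL-Library.Function_Algebras"
begin

text \<open>Vectors of F_q^n are represented as functions nat => 'a vanishing outside {0..<n}.
  Coordinatewise addition comes from Function_Algebras; scalar multiplication is fscale.\<close>

definition fscale :: "'a::field \<Rightarrow> (nat \<Rightarrow> 'a) \<Rightarrow> (nat \<Rightarrow> 'a)" where
  "fscale c v = (\<lambda>i. c * v i)"

global_interpretation fs: vector_space "fscale :: 'a::field \<Rightarrow> (nat \<Rightarrow> 'a) \<Rightarrow> _"
  defines fsubspace = fs.subspace and fspan = fs.span and fdim = fs.dim
  unfolding vector_space_def by (auto simp: fscale_def fun_eq_iff algebra_simps)

definition ambient :: "nat \<Rightarrow> (nat \<Rightarrow> 'a::zero) set" where
  "ambient n = {v. \<forall>i\<ge>n. v i = 0}"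

definition hweight :: "nat \<Rightarrow> (nat \<Rightarrow> 'a::zero) \<Rightarrow> nat" where
  "hweight n v = card {i. i < n \<and> v i \<noteq> 0}"

definition linear_code :: "nat \<Rightarrow> nat \<Rightarrow> (nat \<Rightarrow> 'a::field) set \<Rightarrow> bool" where
  "linear_code n k C \<longleftrightarrow> C \<subseteq> ambient n \<and> fsubspace C
     \<and> fdim C = k"

definition non_degenerate :: "nat \<Rightarrow> (nat \<Rightarrow> 'a::zero) set \<Rightarrow> bool" where
  "non_degenerate n C \<longleftrightarrow> (\<forall>i<n. \<exists>c\<in>C. c i \<noteq> 0)"

definition weight_set :: "nat \<Rightarrow> (nat \<Rightarrow> 'a::zero) set \<Rightarrow> nat set" where
  "weight_set n C = hweight n ` (C - {0})"

definition theta :: "nat \<Rightarrow> nat \<Rightarrow> nat" where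
  "theta q m = (q ^ (m + 1) - 1) div (q - 1)"

definition MWS_code :: "nat \<Rightarrow> nat \<Rightarrow> (nat \<Rightarrow> 'a::{finite,field}) set \<Rightarrow> bool" where
  "MWS_code n k C \<longleftrightarrow> linear_code n k C \<and> (k \<ge> 2 \<longrightarrow> non_degenerate n C)
     \<and> card (weight_set n C) = theta (card (UNIV :: 'a set)) (k - 1)"

end

(* Let e_0, ..., e_{t-1} enumerate the t = theta_q(k-1) points of PG(k-1,q) and take the
   generator matrix in which column e_i is repeated 2^i times. The codeword of a message x
   has weight the sum of 2^i over the points e_i not on the hyperplane x^perp, i.e. the
   binary encoding of that set of points. Two hyperplanes are distinct exactly when their
   complements are, so the nonzero codewords have exactly as many weights as there are
   hyperplanes, namely t. *)

theory Submission
  imports Defs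
begin

lemma sum_apply: "sum f A (i::nat) = (\<Sum>a\<in>A. f a i)"
  by (induction A rule: infinite_finite_induct) auto

definition unit_vec :: "nat \<Rightarrow> nat \<Rightarrow> 'a::{zero,one}" where
  "unit_vec a = (\<lambda>i. if i = a then 1 else 0)"

definition dotp :: "nat \<Rightarrow> (nat \<Rightarrow> 'a::comm_semiring_1) \<Rightarrow> (nat \<Rightarrow> 'a) \<Rightarrow> 'a" where
  "dotp k x y = (\<Sum>l<k. x l * y l)"

lemma dotp_commute: "dotp k x y = dotp k y x"
  by (simp add: dotp_def mult.commute)

lemma dotp_add_left: "dotp k (x + y) z = dotp k x z + dotp k y z"
  by (simp add: dotp_def distrib_right sum.distrib)

lemma dotp_fscale_left: "dotp k (fscale c x) y = c * dotp k x y"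
  by (simp add: dotp_def fscale_def sum_distrib_left mult.assoc)

lemma dotp_fscale_right: "dotp k x (fscale c y) = c * dotp k x y"
  by (simp add: dotp_def fscale_def sum_distrib_left algebra_simps)

lemma dotp_diff_right:
  fixes x :: "nat \<Rightarrow> 'a::comm_ring_1"
  shows "dotp k x (y - z) = dotp k x y - dotp k x z"
  by (simp add: dotp_def right_diff_distrib sum_subtractf)

lemma dotp_unit_vec_right: "a < k \<Longrightarrow> dotp k x (unit_vec a) = x a"
  by (simp add: dotp_def unit_vec_def if_distrib cong: if_cong)

lemma unit_vec_eq_iff: "(unit_vec a :: nat \<Rightarrow> 'a::zero_neq_one) = unit_vec b \<longleftrightarrow> a = b"
  by (auto simp: unit_vec_def fun_eq_iff)

lemma inj_on_unit_vec: "inj_on (unit_vec :: nat \<Rightarrow> nat \<Rightarrow> 'a::zero_neq_one) A"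
  by (rule inj_onI) (simp add: unit_vec_eq_iff)

lemma unit_vec_in_ambient: "a < k \<Longrightarrow> unit_vec a \<in> ambient k"
  by (simp add: unit_vec_def ambient_def)

lemma ambient_subspace: "fsubspace (ambient k :: (nat \<Rightarrow> 'a::field) set)"
  by (auto simp: fs.subspace_def ambient_def fscale_def)

lemma ambient_eq_sum_unit_vec:
  assumes "x \<in> ambient k"
  shows "x = (\<Sum>l<k. fscale (x l) (unit_vec l))"
proof
  fix i
  have "(\<Sum>l<k. fscale (x l) (unit_vec l)) i = (if i < k then x i else 0)"
    by (simp add: sum_apply fscale_def unit_vec_def if_distrib cong: if_cong)
  then show "x i = (\<Sum>l<k. fscale (x l) (unit_vec l)) i"
    using assms by (auto simp: ambient_def)
qed

lemma span_unit_vecs: "fspan (unit_vec ` {..<k}) = (ambient k :: (nat \<Rightarrow> 'a::field) set)"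
proof
  show "fspan (unit_vec ` {..<k}) \<subseteq> (ambient k :: (nat \<Rightarrow> 'a) set)"
    by (rule fs.span_minimal) (auto simp: unit_vec_in_ambient ambient_subspace)
  show "ambient k \<subseteq> fspan (unit_vec ` {..<k} :: (nat \<Rightarrow> 'a) set)"
  proof
    fix x :: "nat \<Rightarrow> 'a" assume "x \<in> ambient k"
    moreover have "(\<Sum>l<k. fscale (x l) (unit_vec l)) \<in> fspan (unit_vec ` {..<k})"
      by (intro fs.span_sum fs.span_scale fs.span_base) auto
    ultimately show "x \<in> fspan (unit_vec ` {..<k})"
      using ambient_eq_sum_unit_vec by metis
  qed
qed

lemma independent_unit_vecs: "fs.independent (unit_vec ` {..<k} :: (nat \<Rightarrow> 'a::field) set)"
proof (rule fs.independent_if_scalars_zero)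
  fix f :: "(nat \<Rightarrow> 'a) \<Rightarrow> 'a" and w :: "nat \<Rightarrow> 'a"
  assume sum0: "(\<Sum>v\<in>unit_vec ` {..<k}. fscale (f v) v) = 0" and w: "w \<in> unit_vec ` {..<k}"
  then obtain a where a: "a < k" "w = unit_vec a" by blast
  have "(\<Sum>l<k. fscale (f (unit_vec l)) (unit_vec l)) = 0"
    using sum0 by (simp add: sum.reindex[OF inj_on_unit_vec] o_def)
  then have "0 = (\<Sum>l<k. fscale (f (unit_vec l)) (unit_vec l)) a" by simp
  also have "\<dots> = f w"
    using a by (simp add: sum_apply fscale_def unit_vec_def if_distrib cong: if_cong)
  finally show "f w = 0" by simp
qed simp

lemma fsubspace_image_ambient:
  fixes G :: "(nat \<Rightarrow> 'a::field) \<Rightarrow> (nat \<Rightarrow> 'a)"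
  assumes "module_hom fscale fscale G"
  shows "fsubspace (G ` ambient k)"
  using module_hom.subspace_image[OF assms ambient_subspace[unfolded fsubspace_def]]
  by (simp add: fsubspace_def)

lemma fdim_image_ambient:
  fixes G :: "(nat \<Rightarrow> 'a::field) \<Rightarrow> (nat \<Rightarrow> 'a)"
  assumes hom: "module_hom fscale fscale G" and inj: "inj_on G (ambient k)"
  shows "fdim (G ` ambient k) = k"
proof -
  let ?B = "unit_vec ` {..<k} :: (nat \<Rightarrow> 'a) set"
  have "fspan (G ` ?B) = G ` fspan ?B"
    using module_hom.span_image[OF hom] by (simp add: fspan_def)
  also have "\<dots> = G ` ambient k"
    by (simp only: span_unit_vecs)
  also have "\<dots> = fspan (G ` ambient k)"
    using fs.span_eq_iff fsubspace_image_ambient[OF hom] by metis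
  finally have "fdim (G ` ambient k) = card (G ` ?B)"
    using fs.dim_eq_card module_hom.independent_injective_image[OF hom independent_unit_vecs]
      inj span_unit_vecs by (metis fspan_def fdim_def)
  also have "\<dots> = card ?B"
    by (rule card_image, rule inj_on_subset[OF inj]) (auto simp: unit_vec_in_ambient)
  also have "\<dots> = k"
    by (simp add: card_image inj_on_unit_vec)
  finally show ?thesis .
qed

lemma linear_code_image:
  fixes G :: "(nat \<Rightarrow> 'a::field) \<Rightarrow> (nat \<Rightarrow> 'a)"
  assumes hom: "module_hom fscale fscale G" and inj: "inj_on G (ambient k)"
    and into: "G ` ambient k \<subseteq> ambient n"
  shows "linear_code n k (G ` ambient k)"
  unfolding linear_code_def
  using into fdim_image_ambient[OF hom inj] fsubspace_image_ambient[OF hom] by simp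

definition lead_index :: "(nat \<Rightarrow> 'a::zero) \<Rightarrow> nat" where
  "lead_index v = (LEAST i. v i \<noteq> 0)"

lemma lead_index_nonzero: "v \<noteq> 0 \<Longrightarrow> v (lead_index v) \<noteq> 0"
  unfolding lead_index_def by (rule LeastI_ex) (auto simp: fun_eq_iff)

lemma lead_index_less: "v \<in> ambient k \<Longrightarrow> v \<noteq> 0 \<Longrightarrow> lead_index v < k"
  using lead_index_nonzero[of v] by (force simp: ambient_def)

lemma lead_index_unit_vec: "lead_index (unit_vec a :: nat \<Rightarrow> 'a::zero_neq_one) = a"
  unfolding lead_index_def by (rule Least_equality) (auto simp: unit_vec_def split: if_splits)

lemma lead_index_fscale: "(c::'a::field) \<noteq> 0 \<Longrightarrow> lead_index (fscale c v) = lead_index v"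
  by (simp add: lead_index_def fscale_def)

text \<open>One representative of each point of the projective space PG(k-1,q): the first
  nonzero coordinate is 1.\<close>

definition normalized :: "nat \<Rightarrow> (nat \<Rightarrow> 'a::field) set" where
  "normalized k = {v \<in> ambient k. v \<noteq> 0 \<and> v (lead_index v) = 1}"

lemma unit_vec_normalized:
  assumes "a < k"
  shows "(unit_vec a :: nat \<Rightarrow> 'a::field) \<in> normalized k"
proof -
  have "unit_vec a a = (1::'a)" "unit_vec a \<noteq> (0 :: nat \<Rightarrow> 'a)"
    by (auto simp: unit_vec_def fun_eq_iff)
  with assms show ?thesis
    by (simp add: normalized_def lead_index_unit_vec unit_vec_in_ambient)
qed

lemma normalized_lead_index_less: "r \<in> normalized k \<Longrightarrow> lead_index r < k"
  by (simp add: normalized_def lead_index_less)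

lemma fscale_normalized_in_ambient:
  assumes "c \<noteq> 0" "r \<in> normalized k"
  shows "fscale c r \<in> ambient k - {0}"
proof -
  have "fscale c r (lead_index r) = c"
    using assms by (simp add: fscale_def normalized_def)
  then have "fscale c r \<noteq> 0"
    using assms(1) by (metis zero_fun_apply)
  with assms show ?thesis
    by (auto simp: normalized_def ambient_def fscale_def)
qed

lemma ex_fscale_normalized:
  assumes "v \<in> ambient k" "v \<noteq> 0"
  obtains c r where "c \<noteq> 0" "r \<in> normalized k" "v = fscale c r"
proof
  define c where "c = v (lead_index v)"
  show c: "c \<noteq> 0"
    using lead_index_nonzero[OF assms(2)] by (simp add: c_def)
  let ?r = "fscale (inverse c) v"
  have "lead_index ?r = lead_index v"
    using c by (simp add: lead_index_fscale)
  then have "?r (lead_index ?r) = 1"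
    using c by (simp add: fscale_def c_def)
  moreover have "?r \<noteq> 0"
    using calculation by (metis zero_fun_apply zero_neq_one)
  ultimately show "?r \<in> normalized k"
    using assms(1) by (auto simp: normalized_def ambient_def fscale_def)
  show "v = fscale c ?r"
    using c by (simp add: fscale_def fun_eq_iff)
qed

lemma fscale_normalized_eqD:
  assumes "c \<noteq> 0" "r \<in> normalized k" "r' \<in> normalized k" "fscale c r = fscale c' r'"
  shows "c = c' \<and> r = r'"
proof -
  have "c' \<noteq> 0"
    using assms fscale_normalized_in_ambient[of c r k] by (auto simp: fscale_def fun_eq_iff)
  then have "lead_index r = lead_index r'"
    using assms lead_index_fscale by metis
  moreover have "c * r (lead_index r) = c' * r' (lead_index r)"
    using assms(4) by (simp add: fscale_def fun_eq_iff)
  ultimately have "c = c'"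
    using assms(2,3) by (simp add: normalized_def)
  with assms(1,4) show ?thesis
    by (auto simp: fscale_def fun_eq_iff)
qed

lemma bij_betw_fscale_normalized:
  "bij_betw (\<lambda>(c, r). fscale c r) ((UNIV - {0}) \<times> normalized k) (ambient k - {0})"
proof (rule bij_betw_imageI)
  show "inj_on (\<lambda>(c, r). fscale c r) ((UNIV - {0}) \<times> normalized k)"
    by (rule inj_onI) (auto dest: fscale_normalized_eqD)
  show "(\<lambda>(c, r). fscale c r) ` ((UNIV - {0}) \<times> normalized k) = ambient k - {0}"
    using fscale_normalized_in_ambient by (fastforce elim: ex_fscale_normalized)
qed

lemma finite_ambient: "finite (ambient k :: (nat \<Rightarrow> 'a::{finite,zero}) set)"
  and card_ambient: "card (ambient k :: (nat \<Rightarrow> 'a) set) = card (UNIV :: 'a set) ^ k"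
proof (induction k)
  case 0
  have "(ambient 0 :: (nat \<Rightarrow> 'a) set) = {0}"
    by (auto simp: ambient_def fun_eq_iff)
  then show "finite (ambient 0 :: (nat \<Rightarrow> 'a) set)"
    and "card (ambient 0 :: (nat \<Rightarrow> 'a) set) = card (UNIV :: 'a set) ^ 0"
    by simp_all
next
  case (Suc k)
  have bij: "bij_betw (\<lambda>(w, a). w(k := a)) (ambient k \<times> UNIV)
      (ambient (Suc k) :: (nat \<Rightarrow> 'a) set)"
    by (rule bij_betw_byWitness[where f' = "\<lambda>v. (v(k := 0), v k)"]) (auto simp: ambient_def)
  show "finite (ambient (Suc k) :: (nat \<Rightarrow> 'a) set)"
    using bij_betw_finite[OF bij] Suc by simp
  show "card (ambient (Suc k) :: (nat \<Rightarrow> 'a) set) = card (UNIV :: 'a set) ^ Suc k"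
    using bij_betw_same_card[OF bij] Suc by (simp add: card_cartesian_product mult.commute)
qed

lemma card_normalized:
  "(card (UNIV :: 'a::{finite,field} set) - 1) * card (normalized k :: (nat \<Rightarrow> 'a) set)
     = card (UNIV :: 'a set) ^ k - 1"
proof -
  have "0 \<in> (ambient k :: (nat \<Rightarrow> 'a) set)"
    by (simp add: ambient_def)
  then have "card (ambient k - {0} :: (nat \<Rightarrow> 'a) set) = card (UNIV :: 'a set) ^ k - 1"
    by (simp add: finite_ambient card_ambient)
  moreover have "card ((UNIV - {0::'a}) \<times> (normalized k :: (nat \<Rightarrow> 'a) set))
      = card (ambient k - {0} :: (nat \<Rightarrow> 'a) set)"
    using bij_betw_fscale_normalized by (rule bij_betw_same_card)
  ultimately show ?thesis
    by (simp add: card_cartesian_product)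
qed

lemma card_normalized_theta:
  assumes "k \<ge> 1"
  shows "card (normalized k :: (nat \<Rightarrow> 'a::{finite,field}) set)
    = theta (card (UNIV :: 'a set)) (k - 1)"
proof -
  let ?q = "card (UNIV :: 'a set)"
  have "card {0::'a, 1} \<le> ?q"
    by (rule card_mono) auto
  then have "?q - 1 \<noteq> 0"
    by simp
  have "theta ?q (k - 1) = (?q ^ k - 1) div (?q - 1)"
    using assms by (simp add: theta_def)
  also have "\<dots> = (?q - 1) * card (normalized k :: (nat \<Rightarrow> 'a) set) div (?q - 1)"
    by (simp only: card_normalized)
  also have "\<dots> = card (normalized k :: (nat \<Rightarrow> 'a) set)"
    using \<open>?q - 1 \<noteq> 0\<close> by simp
  finally show ?thesis ..
qed

lemma ex_normalized_dotp_nonzero: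
  assumes "x \<in> ambient k" "x \<noteq> 0"
  shows "\<exists>r\<in>normalized k. dotp k x r \<noteq> 0"
proof
  let ?a = "lead_index x"
  have "?a < k"
    using assms by (rule lead_index_less)
  then show "unit_vec ?a \<in> normalized k" "dotp k x (unit_vec ?a) \<noteq> 0"
    using lead_index_nonzero[OF assms(2)] by (simp_all add: unit_vec_normalized dotp_unit_vec_right)
qed

text \<open>Distinct projective points are separated by a hyperplane: with a the leading index of x
  and b that of y - y_a x, the functional u_b - x_b u_a (u_i the unit vectors) kills x but
  not y.\<close>

lemma normalized_separation:
  assumes x: "x \<in> normalized k" and y: "y \<in> normalized k" and "x \<noteq> y"
  shows "\<exists>r\<in>normalized k. dotp k x r = 0 \<and> dotp k y r \<noteq> 0"
proof -
  define a where "a = lead_index x"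
  have xa: "x a = 1" and ak: "a < k"
    using x by (simp_all add: normalized_def a_def normalized_lead_index_less)
  define c where "c = y a"
  define z where "z = y - fscale c x"
  have "z \<noteq> 0"
  proof
    assume "z = 0"
    then have yx: "y = fscale c x"
      by (simp add: z_def)
    have "c \<noteq> 0"
      using y yx by (auto simp: normalized_def fscale_def fun_eq_iff)
    then have "lead_index y = a"
      using yx by (simp add: lead_index_fscale a_def)
    then have "c = 1"
      using y xa yx by (simp add: normalized_def fscale_def)
    then show False
      using yx \<open>x \<noteq> y\<close> by (simp add: fscale_def)
  qed
  moreover have "z \<in> ambient k"
    using x y by (auto simp: z_def ambient_def normalized_def fscale_def)
  ultimately have zb: "z (lead_index z) \<noteq> 0" and bk: "lead_index z < k"
    by (simp_all add: lead_index_nonzero lead_index_less)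
  define b where "b = lead_index z"
  define r0 where "r0 = unit_vec b - fscale (x b) (unit_vec a)"
  have x_r0: "dotp k x r0 = 0"
    using ak bk xa
    by (simp add: r0_def b_def dotp_diff_right dotp_fscale_right dotp_unit_vec_right)
  have "dotp k y r0 = y b - x b * c"
    using ak bk
    by (simp add: r0_def b_def c_def dotp_diff_right dotp_fscale_right dotp_unit_vec_right)
  also have "\<dots> = z b"
    by (simp add: z_def fscale_def mult.commute)
  finally have y_r0: "dotp k y r0 = z b" .
  have "r0 \<in> ambient k"
    using ak bk by (simp add: r0_def b_def ambient_def unit_vec_def fscale_def)
  moreover have "r0 \<noteq> 0"
    using y_r0 zb by (auto simp: dotp_def b_def)
  ultimately obtain c r where "c \<noteq> 0" "r \<in> normalized k" "r0 = fscale c r"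
    by (rule ex_fscale_normalized)
  then show ?thesis
    using x_r0 y_r0 zb by (auto simp: dotp_fscale_right b_def)
qed

lemma sum_power2_eq_horner_sum:
  assumes "A \<subseteq> {..<m}"
  shows "(\<Sum>i\<in>A. (2::nat) ^ i) = horner_sum of_bool 2 (map (\<lambda>i. i \<in> A) [0..<m])"
proof -
  have "(\<Sum>i\<in>A. (2::nat) ^ i) = (\<Sum>i=0..<m. of_bool (i \<in> A) * 2 ^ i)"
    using assms by (simp add: sum.If_cases inf.absorb2 atLeast0LessThan flip: of_bool_def)
  then show ?thesis
    by (simp add: horner_sum_eq_sum)
qed

lemma bit_sum_power2_iff:
  assumes "finite A"
  shows "bit (\<Sum>i\<in>A. (2::nat) ^ i) n \<longleftrightarrow> n \<in> A"
proof -
  obtain m where "A \<subseteq> {..<m}"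
    using assms by (auto simp: finite_nat_set_iff_bounded)
  then show ?thesis
    by (auto simp: sum_power2_eq_horner_sum bit_horner_sum_bit_iff)
qed

lemma inj_on_sum_power2: "inj_on (\<lambda>A. \<Sum>i\<in>A. (2::nat) ^ i) {A. finite A}"
  by (rule inj_onI) (metis bit_sum_power2_iff mem_Collect_eq subsetI subset_antisym)

definition block :: "nat \<Rightarrow> nat set" where
  "block i = {2 ^ i - 1 ..< 2 ^ Suc i - 1}"

lemma finite_block: "finite (block i)"
  by (simp add: block_def)

lemma card_block: "card (block i) = 2 ^ i"
proof -
  have "(1::nat) \<le> 2 ^ i"
    by simp
  then show ?thesis
    by (simp add: block_def)
qed

lemma UN_block: "(\<Union>i<t. block i) = {..<2 ^ t - 1}"
proof (induction t)
  case (Suc t)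
  have "(1::nat) \<le> 2 ^ t"
    by simp
  then have "{..<2 ^ t - 1} \<union> block t = {..<2 ^ Suc t - 1}"
    by (auto simp: block_def)
  with Suc show ?case
    by (simp add: lessThan_Suc Un_commute)
qed simp

lemma mem_block_less: "i < t \<Longrightarrow> j \<in> block i \<Longrightarrow> j < 2 ^ t - 1"
  using UN_block[of t] by blast

lemma ex_block_mem: "j < 2 ^ t - 1 \<Longrightarrow> \<exists>i<t. j \<in> block i"
  using UN_block[of t] by blast

lemma block_disjoint:
  assumes "i \<noteq> i'"
  shows "block i \<inter> block i' = {}"
proof -
  have "block i \<inter> block i' = {}" if "i < i'" for i i'
  proof -
    have "(2::nat) ^ Suc i \<le> 2 ^ i'"
      using that by (intro power_increasing) auto
    then show ?thesis
      by (auto simp: block_def)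
  qed
  with assms show ?thesis
    by (metis Int_commute linorder_neqE_nat)
qed

definition blowup :: "nat \<Rightarrow> (nat \<Rightarrow> 'a::comm_monoid_add) \<Rightarrow> nat \<Rightarrow> 'a" where
  "blowup t v = (\<lambda>j. \<Sum>i<t. if j \<in> block i then v i else 0)"

lemma blowup_block:
  assumes "i < t" "j \<in> block i"
  shows "blowup t v j = v i"
proof -
  have "blowup t v j = (\<Sum>i'<t. if i' = i then v i else 0)"
    unfolding blowup_def using assms block_disjoint by (intro sum.cong) auto
  with assms show ?thesis
    by simp
qed

lemma blowup_in_ambient: "blowup t v \<in> ambient (2 ^ t - 1)"
  using mem_block_less by (fastforce simp: ambient_def blowup_def intro!: sum.neutral)

lemma blowup_eq_0D:
  assumes "blowup t v = 0" "i < t"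
  shows "v i = 0"
proof -
  have "(1::nat) \<le> 2 ^ i"
    by simp
  then have "2 ^ i - 1 \<in> block i"
    unfolding block_def by (simp, linarith)
  then show ?thesis
    using assms blowup_block by (metis zero_fun_apply)
qed

lemma hweight_blowup: "hweight (2 ^ t - 1) (blowup t v) = (\<Sum>i | i < t \<and> v i \<noteq> 0. 2 ^ i)"
proof -
  have "{j. j < 2 ^ t - 1 \<and> blowup t v j \<noteq> 0} = (\<Union>i\<in>{i. i < t \<and> v i \<noteq> 0}. block i)"
    using ex_block_mem mem_block_less by (fastforce simp: blowup_block)
  moreover have "card (\<Union>i\<in>{i. i < t \<and> v i \<noteq> 0}. block i)
      = (\<Sum>i | i < t \<and> v i \<noteq> 0. card (block i))"
    by (rule card_UN_disjoint) (auto simp: finite_block block_disjoint)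
  ultimately show ?thesis
    by (simp add: hweight_def card_block)
qed

lemma blowup_add: "blowup t (v + w) = blowup t v + blowup t w"
  by (auto simp: blowup_def fun_eq_iff sum.distrib[symmetric] intro!: sum.cong)

lemma blowup_fscale: "blowup t (fscale c v) = fscale c (blowup t v)"
  by (auto simp: blowup_def fun_eq_iff fscale_def sum_distrib_left intro!: sum.cong)

definition blowup_enc ::
    "nat \<Rightarrow> nat \<Rightarrow> (nat \<Rightarrow> nat \<Rightarrow> 'a::field) \<Rightarrow> (nat \<Rightarrow> 'a) \<Rightarrow> nat \<Rightarrow> 'a" where
  "blowup_enc k t e x = blowup t (\<lambda>i. dotp k x (e i))"

definition simplex_support ::
    "nat \<Rightarrow> nat \<Rightarrow> (nat \<Rightarrow> nat \<Rightarrow> 'a::field) \<Rightarrow> (nat \<Rightarrow> 'a) \<Rightarrow> nat set" where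
  "simplex_support k t e x = {i. i < t \<and> dotp k x (e i) \<noteq> 0}"

lemma module_hom_blowup_enc: "module_hom fscale fscale (blowup_enc k t e)"
proof -
  have "(\<lambda>i. dotp k (x + y) (e i)) = (\<lambda>i. dotp k x (e i)) + (\<lambda>i. dotp k y (e i))"
    and "(\<lambda>i. dotp k (fscale c x) (e i)) = fscale c (\<lambda>i. dotp k x (e i))" for x y c
    by (simp_all add: fun_eq_iff dotp_add_left dotp_fscale_left
        fscale_def[of c "\<lambda>i. dotp k x (e i)"])
  then show ?thesis
    using fs.module_axioms by (simp add: module_hom_iff blowup_enc_def blowup_add blowup_fscale)
qed

lemma blowup_enc_zero: "blowup_enc k t e 0 = 0"
  by (simp add: blowup_enc_def blowup_def dotp_def fun_eq_iff)

lemma hweight_blowup_enc: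
  "hweight (2 ^ t - 1) (blowup_enc k t e x) = (\<Sum>i\<in>simplex_support k t e x. 2 ^ i)"
  unfolding blowup_enc_def simplex_support_def by (rule hweight_blowup)

lemma finite_simplex_support: "finite (simplex_support k t e x)"
  by (simp add: simplex_support_def)

lemma simplex_support_fscale:
  "c \<noteq> 0 \<Longrightarrow> simplex_support k t e (fscale c x) = simplex_support k t e x"
  by (simp add: simplex_support_def dotp_fscale_left)

context
  fixes k t :: nat and e :: "nat \<Rightarrow> nat \<Rightarrow> 'a::field"
  assumes enum: "bij_betw e {..<t} (normalized k)"
begin

lemma simplex_support_nonempty:
  assumes "x \<in> ambient k" "x \<noteq> 0"
  shows "simplex_support k t e x \<noteq> {}"
proof -
  obtain r where "r \<in> normalized k" "dotp k x r \<noteq> 0"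
    using ex_normalized_dotp_nonzero[OF assms] by blast
  moreover have "r \<in> e ` {..<t}"
    using enum calculation(1) by (simp add: bij_betw_def)
  then obtain i where "i < t" "e i = r"
    by auto
  ultimately show ?thesis
    by (auto simp: simplex_support_def)
qed

lemma inj_on_simplex_support: "inj_on (simplex_support k t e) (normalized k)"
proof (rule inj_onI, rule ccontr)
  fix x y :: "nat \<Rightarrow> 'a"
  assume "x \<in> normalized k" "y \<in> normalized k" "x \<noteq> y"
  then obtain r where r: "r \<in> normalized k" "dotp k x r = 0" "dotp k y r \<noteq> 0"
    using normalized_separation by blast
  moreover have "r \<in> e ` {..<t}"
    using enum r(1) by (simp add: bij_betw_def)
  then obtain i where "i < t" "e i = r"
    by auto
  ultimately have "i \<in> simplex_support k t e y - simplex_support k t e x"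
    by (simp add: simplex_support_def)
  then show "simplex_support k t e x = simplex_support k t e y \<Longrightarrow> False"
    by simp
qed

lemma inj_on_blowup_enc: "inj_on (blowup_enc k t e) (ambient k)"
proof -
  have "x = 0" if x: "x \<in> ambient k" and enc0: "blowup_enc k t e x = 0" for x
  proof (rule ccontr)
    assume "x \<noteq> 0"
    then obtain i where "i \<in> simplex_support k t e x"
      using simplex_support_nonempty[OF x \<open>x \<noteq> 0\<close>] by blast
    then show False
      using blowup_eq_0D[OF enc0[unfolded blowup_enc_def]] by (auto simp: simplex_support_def)
  qed
  then show ?thesis
    using module_hom.inj_on_iff_eq_0[OF module_hom_blowup_enc]
      ambient_subspace[unfolded fsubspace_def] by blast
qed

lemma linear_code_blowup_enc: "linear_code (2 ^ t - 1) k (blowup_enc k t e ` ambient k)"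
  by (rule linear_code_image[OF module_hom_blowup_enc inj_on_blowup_enc])
    (unfold blowup_enc_def, use blowup_in_ambient in blast)

lemma non_degenerate_blowup_enc: "non_degenerate (2 ^ t - 1) (blowup_enc k t e ` ambient k)"
  unfolding non_degenerate_def
proof (intro allI impI)
  fix j :: nat
  assume "j < 2 ^ t - 1"
  then obtain i where i: "i < t" "j \<in> block i"
    using ex_block_mem by blast
  then have r: "e i \<in> normalized k"
    using enum by (auto simp: bij_betw_def)
  let ?a = "lead_index (e i)"
  have a: "?a < k"
    using r by (rule normalized_lead_index_less)
  have "blowup_enc k t e (unit_vec ?a) j = e i ?a"
    using i a by (simp add: blowup_enc_def blowup_block dotp_commute dotp_unit_vec_right)
  also have "\<dots> = 1"
    using r by (simp add: normalized_def)
  finally show "\<exists>c\<in>blowup_enc k t e ` ambient k. c j \<noteq> 0"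
    using a unit_vec_in_ambient by force
qed

lemma card_weight_set_blowup_enc:
  "card (weight_set (2 ^ t - 1) (blowup_enc k t e ` ambient k)) = t"
proof -
  let ?G = "blowup_enc k t e" and ?S = "simplex_support k t e"
  have "?G ` ambient k - {0} = ?G ` (ambient k - {0})"
    using inj_on_image_set_diff[OF inj_on_blowup_enc, of "ambient k" "{0}"]
    by (simp add: ambient_def blowup_enc_zero)
  then have "weight_set (2 ^ t - 1) (?G ` ambient k)
      = (\<lambda>A. \<Sum>i\<in>A. 2 ^ i) ` ?S ` (ambient k - {0})"
    unfolding weight_set_def by (simp only: image_image hweight_blowup_enc)
  also have "?S ` (ambient k - {0}) = ?S ` normalized k"
  proof (rule subset_antisym)
    show "?S ` (ambient k - {0}) \<subseteq> ?S ` normalized k"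
    proof
      fix A
      assume "A \<in> ?S ` (ambient k - {0})"
      then obtain x where x: "x \<in> ambient k" "x \<noteq> 0" and A: "A = ?S x"
        by blast
      obtain c r where "c \<noteq> 0" "r \<in> normalized k" "x = fscale c r"
        using x by (rule ex_fscale_normalized)
      with A show "A \<in> ?S ` normalized k"
        by (simp add: simplex_support_fscale)
    qed
    show "?S ` normalized k \<subseteq> ?S ` (ambient k - {0})"
      by (auto simp: normalized_def)
  qed
  finally have weights:
    "weight_set (2 ^ t - 1) (?G ` ambient k) = (\<lambda>A. \<Sum>i\<in>A. 2 ^ i) ` ?S ` normalized k" .
  have "inj_on (\<lambda>A. \<Sum>i\<in>A. (2::nat) ^ i) (?S ` normalized k)"
    by (rule inj_on_subset[OF inj_on_sum_power2]) (auto simp: finite_simplex_support)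
  then have "card (weight_set (2 ^ t - 1) (?G ` ambient k)) = card (?S ` normalized k)"
    unfolding weights by (rule card_image)
  also have "\<dots> = t"
    using card_image[OF inj_on_simplex_support] bij_betw_same_card[OF enum] by simp
  finally show ?thesis .
qed

end

theorem mainTheorem1:
  fixes k :: nat
  assumes "k \<ge> 2"
  shows "\<exists>C :: (nat \<Rightarrow> 'a::{finite,field}) set.
           MWS_code (2 ^ theta (card (UNIV :: 'a set)) (k - 1) - 1) k C"
proof -
  define t where "t = theta (card (UNIV :: 'a set)) (k - 1)"
  have "finite (normalized k :: (nat \<Rightarrow> 'a) set)"
    using finite_ambient by (rule finite_subset[rotated]) (auto simp: normalized_def)
  moreover have "card (normalized k :: (nat \<Rightarrow> 'a) set) = t"
    using assms card_normalized_theta[of k, where 'a = 'a] by (simp add: t_def)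
  ultimately obtain e :: "nat \<Rightarrow> nat \<Rightarrow> 'a" where e: "bij_betw e {..<t} (normalized k)"
    using ex_bij_betw_nat_finite atLeast0LessThan by metis
  show ?thesis
    unfolding MWS_code_def t_def[symmetric]
    using linear_code_blowup_enc[OF e] non_degenerate_blowup_enc[OF e]
      card_weight_set_blowup_enc[OF e] by blast
qed

end
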